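(* (Preservation for $\lambda_{\mathrm{act}}$ configurations.) If $\Gamma ; \Delta \vdash \mathcal{C}_1$ and $\mathcal{C}_1 \longrightarrow \mathcal{C}_2$, then $\Gamma ; \Delta \vdash \mathcal{C}_2$.
   Context: The calculus $\lambda_{\mathrm{act}}$. Types $A,B,C ::= \mathbf{1} \mid A \xrightarrow{C} B \mid \mathsf{ActorRef}(A)$; $\alpha$ ranges over variables and names; values $V,W ::= \alpha \mid \lambda x.M \mid ()$; computations $M,N ::= V\,W \mid \mathbf{let}\ x \Leftarrow M\ \mathbf{in}\ N \mid \mathbf{return}\ V \mid \mathbf{spawn}\ M \mid \mathbf{send}\ V\ W \mid \mathbf{receive} \mid \mathbf{self}$. Value typing: $\Gamma\vdash\alpha:A$ if $\alpha:A\in\Gamma$; $\Gamma\vdash\lambda x.M:A\xrightarrow{C}B$ if $\Gamma,x:A\mid C\vdash M:B$; $\Gamma\vdash():\mathbf 1$. Computation typing $\Gamma\mid C\vdash M:A$: $V\,W:B$ if $\Gamma\vdash V:A\xrightarrow{C}B$, $\Gamma\vdash W:A$; $\Gamma\mid C\vdash\mathbf{let}\ x\Leftarrow M\ \mathbf{in}\ N:B$ if $\Gamma\mid C\vdash M:A$, $\Gamma,x:A\mid C\vdash N:B$; $\Gamma\mid C\vdash\mathbf{return}\ V:A$ if $\Gamma\vdash V:A$; $\Gamma\mid C\vdash\mathbf{send}\ V\ W:\mathbf 1$ if $\Gamma\vdash V:A$, $\Gamma\vdash W:\mathsf{ActorRef}(A)$; $\Gamma\mid A\vdash\mathbf{receive}:A$;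 $\Gamma\mid C\vdash\mathbf{spawn}\ M:\mathsf{ActorRef}(A)$ if $\Gamma\mid A\vdash M:\mathbf 1$; $\Gamma\mid A\vdash\mathbf{self}:\mathsf{ActorRef}(A)$. Evaluation contexts $E ::= [\,]\mid\mathbf{let}\ x\Leftarrow E\ \mathbf{in}\ M$; term reduction: $(\lambda x.M)V\longrightarrow_{\mathsf{M}} M\{V/x\}$, $\mathbf{let}\ x\Leftarrow\mathbf{return}\ V\ \mathbf{in}\ M\longrightarrow_{\mathsf{M}} M\{V/x\}$, $E[M]\longrightarrow_{\mathsf{M}}E[M']$ if $M\longrightarrow_{\mathsf{M}}M'$. Configurations $\mathcal{C},\mathcal{D} ::= \mathcal{C}\parallel\mathcal{D}\mid(\nu a)\mathcal{C}\mid\langle a,M,\vec V\rangle$ (actor named $a$ evaluating $M$ with mailbox $\vec V=V_1\cdot\ldots\cdot V_n$; $\epsilon$ empty). Configuration contexts $G ::= [\,]\mid G\parallel\mathcal{C}\mid(\nu a)G$. Configuration typing: (Par) $\Gamma;\Delta_1\vdash\mathcal{C}_1$, $\Gamma;\Delta_2\vdash\mathcal{C}_2$ give $\Gamma;\Delta_1,\Delta_2\vdash\mathcal{C}_1\parallel\mathcal{C}_2$; (Pid) $\Gamma,a:\mathsf{ActorRef}(A);\Delta,a:A\vdash\mathcal{C}$ gives $\Gamma;\Delta\vdash(\nu a)\mathcal{C}$; (Actor) $\Gamma,a:\mathsf{ActorRef}(A)\mid A\vdash M:\mathbf 1$ and $\Gamma,a:\mathsf{ActorRef}(A)\vdash V_i:A$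 for all $i$ give $\Gamma,a:\mathsf{ActorRef}(A);a:A\vdash\langle a,M,\vec V\rangle$. Structural congruence $\equiv$: least congruence closed under $G[-]$ with commutativity/associativity of $\parallel$ and $\mathcal{C}\parallel(\nu a)\mathcal{D}\equiv(\nu a)(\mathcal{C}\parallel\mathcal{D})$ if $a\notin\mathsf{fv}(\mathcal{C})$. Reduction $\longrightarrow$ (modulo $\equiv$): (Spawn) $\langle a,E[\mathbf{spawn}\ M],\vec V\rangle\longrightarrow(\nu b)(\langle a,E[\mathbf{return}\ b],\vec V\rangle\parallel\langle b,M,\epsilon\rangle)$, $b$ fresh; (Send) $\langle a,E[\mathbf{send}\ V'\ b],\vec V\rangle\parallel\langle b,M,\vec W\rangle\longrightarrow\langle a,E[\mathbf{return}\ ()],\vec V\rangle\parallel\langle b,M,\vec W\cdot V'\rangle$; (SendSelf) $\langle a,E[\mathbf{send}\ V'\ a],\vec V\rangle\longrightarrow\langle a,E[\mathbf{return}\ ()],\vec V\cdot V'\rangle$; (Self) $\langle a,E[\mathbf{self}],\vec V\rangle\longrightarrow\langle a,E[\mathbf{return}\ a],\vec V\rangle$; (Receive) $\langle a,E[\mathbf{receive}],W\cdot\vec V\rangle\longrightarrow\langle a,E[\mathbf{return}\ W],\vec V\rangle$; (Lift) $G[\mathcal{C}_1]\longrightarrow G[\mathcal{C}_2]$ if $\mathcal{C}_1\longrightarrow\mathcal{C}_2$; (LiftM) $\langle a,M_1,\vec V\rangle\longrightarrow\langle a,M_2,\vec V\rangle$ if $M_1\longrightarrow_{\mathsf{M}}M_2$.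 *)

theory Defs
  imports Main
begin

type_synonym name = nat

text \<open>Types: 1, A -C-> B (TFun A C B), ActorRef(A).\<close>
datatype ty = TUnit | TFun ty ty ty | TRef ty

text \<open>Variables are de Bruijn indices (Var i); actor names are atoms (Nm a).
  Lam binds index 0 in its body; Let M N binds index 0 in N.\<close>
datatype val = Var nat | Nm name | Lam tm | Unit
     and tm = App val val | Let tm tm | Return val | Spawn tm | Send val val
            | Receive | Self

primrec liftv :: "nat \<Rightarrow> val \<Rightarrow> val" and liftt :: "nat \<Rightarrow> tm \<Rightarrow> tm" where
  "liftv k (Var i) = (if i < k then Var i else Var (Suc i))"
| "liftv k (Nm a) = Nm a"
| "liftv k (Lam M) = Lam (liftt (Suc k) M)"
| "liftv k Unit = Unit"
| "liftt k (App V W) = App (liftv k V) (liftv k W)"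
| "liftt k (Let M N) = Let (liftt k M) (liftt (Suc k) N)"
| "liftt k (Return V) = Return (liftv k V)"
| "liftt k (Spawn M) = Spawn (liftt k M)"
| "liftt k (Send V W) = Send (liftv k V) (liftv k W)"
| "liftt k Receive = Receive"
| "liftt k Self = Self"

primrec substv :: "val \<Rightarrow> nat \<Rightarrow> val \<Rightarrow> val" and substt :: "tm \<Rightarrow> nat \<Rightarrow> val \<Rightarrow> tm" where
  "substv (Var i) k U = (if i < k then Var i else if i = k then U else Var (i - 1))"
| "substv (Nm a) k U = Nm a"
| "substv (Lam M) k U = Lam (substt M (Suc k) (liftv 0 U))"
| "substv Unit k U = Unit"
| "substt (App V W) k U = App (substv V k U) (substv W k U)"
| "substt (Let M N) k U = Let (substt M k U) (substt N (Suc k) (liftv 0 U))"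
| "substt (Return V) k U = Return (substv V k U)"
| "substt (Spawn M) k U = Spawn (substt M k U)"
| "substt (Send V W) k U = Send (substv V k U) (substv W k U)"
| "substt Receive k U = Receive"
| "substt Self k U = Self"

text \<open>M{V/x} where x is the innermost bound variable (index 0).\<close>
abbreviation inst :: "tm \<Rightarrow> val \<Rightarrow> tm" where "inst M V \<equiv> substt M 0 V"

primrec fnv :: "val \<Rightarrow> name set" and fnt :: "tm \<Rightarrow> name set" where
  "fnv (Var i) = {}"
| "fnv (Nm a) = {a}"
| "fnv (Lam M) = fnt M"
| "fnv Unit = {}"
| "fnt (App V W) = fnv V \<union> fnv W"
| "fnt (Let M N) = fnt M \<union> fnt N"
| "fnt (Return V) = fnv V"
| "fnt (Spawn M) = fnt M"
| "fnt (Send V W) = fnv V \<union> fnv W"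
| "fnt Receive = {}"
| "fnt Self = {}"

text \<open>The environment Gamma is split into a name part G (names to types) and a
  variable part Vs (types of de Bruijn variables). Gamma |- V : A is
  vtyp G Vs V A; Gamma | C |- M : A is ttyp G Vs C M A.\<close>

inductive vtyp :: "(name \<rightharpoonup> ty) \<Rightarrow> ty list \<Rightarrow> val \<Rightarrow> ty \<Rightarrow> bool"
  and ttyp :: "(name \<rightharpoonup> ty) \<Rightarrow> ty list \<Rightarrow> ty \<Rightarrow> tm \<Rightarrow> ty \<Rightarrow> bool" where
  T_Var: "i < length Vs \<Longrightarrow> Vs ! i = A \<Longrightarrow> vtyp G Vs (Var i) A"
| T_Name: "G a = Some A \<Longrightarrow> vtyp G Vs (Nm a) A"
| T_Lam: "ttyp G (A # Vs) C M B \<Longrightarrow> vtyp G Vs (Lam M) (TFun A C B)"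
| T_Unit: "vtyp G Vs Unit TUnit"
| T_App: "vtyp G Vs V (TFun A C B) \<Longrightarrow> vtyp G Vs W A \<Longrightarrow> ttyp G Vs C (App V W) B"
| T_Let: "ttyp G Vs C M A \<Longrightarrow> ttyp G (A # Vs) C N B \<Longrightarrow> ttyp G Vs C (Let M N) B"
| T_Return: "vtyp G Vs V A \<Longrightarrow> ttyp G Vs C (Return V) A"
| T_Send: "vtyp G Vs V A \<Longrightarrow> vtyp G Vs W (TRef A) \<Longrightarrow> ttyp G Vs C (Send V W) TUnit"
| T_Receive: "ttyp G Vs A Receive A"
| T_Spawn: "ttyp G Vs A M TUnit \<Longrightarrow> ttyp G Vs C (Spawn M) (TRef A)"
| T_Self: "ttyp G Vs A Self (TRef A)"

datatype ectx = Hole | ELet ectx tm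

primrec plug :: "ectx \<Rightarrow> tm \<Rightarrow> tm" where
  "plug Hole M = M"
| "plug (ELet E N) M = Let (plug E M) N"

inductive tred :: "tm \<Rightarrow> tm \<Rightarrow> bool" where
  R_Beta: "tred (App (Lam M) V) (inst M V)"
| R_Let: "tred (Let (Return V) M) (inst M V)"
| R_Ctx: "tred M M' \<Longrightarrow> tred (plug E M) (plug E M')"

datatype config = Par config config | Nu name config | Actor name tm "val list"

primrec fnc :: "config \<Rightarrow> name set" where
  "fnc (Par C D) = fnc C \<union> fnc D"
| "fnc (Nu a C) = fnc C - {a}"
| "fnc (Actor a M Ws) = {a} \<union> fnt M \<union> (\<Union>W\<in>set Ws. fnv W)"

text \<open>Configuration typing Gamma; Delta |- C, with Gamma = (G, Vs) and the
  linear environment Delta a finite map from names to (mailbox) types.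
  Delta1, Delta2 is the disjoint union.\<close>

inductive ctyp :: "(name \<rightharpoonup> ty) \<Rightarrow> ty list \<Rightarrow> (name \<rightharpoonup> ty) \<Rightarrow> config \<Rightarrow> bool" where
  T_Par: "ctyp G Vs D1 C1 \<Longrightarrow> ctyp G Vs D2 C2 \<Longrightarrow> dom D1 \<inter> dom D2 = {}
          \<Longrightarrow> ctyp G Vs (D1 ++ D2) (Par C1 C2)"
| T_Pid: "ctyp (G(a \<mapsto> TRef A)) Vs (D(a \<mapsto> A)) C \<Longrightarrow> D a = None
          \<Longrightarrow> ctyp G Vs D (Nu a C)"
| T_Actor: "G a = Some (TRef A) \<Longrightarrow> ttyp G Vs A M TUnit \<Longrightarrow> (\<forall>W\<in>set Ws. vtyp G Vs W A)
          \<Longrightarrow> ctyp G Vs [a \<mapsto> A] (Actor a M Ws)"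

inductive scong :: "config \<Rightarrow> config \<Rightarrow> bool" where
  SC_refl: "scong C C"
| SC_sym: "scong C D \<Longrightarrow> scong D C"
| SC_trans: "scong C D \<Longrightarrow> scong D F \<Longrightarrow> scong C F"
| SC_comm: "scong (Par C D) (Par D C)"
| SC_assoc: "scong (Par C (Par D F)) (Par (Par C D) F)"
| SC_extr: "a \<notin> fnc C \<Longrightarrow> scong (Par C (Nu a D)) (Nu a (Par C D))"
| SC_par: "scong C D \<Longrightarrow> scong (Par C F) (Par D F)"
| SC_nu: "scong C D \<Longrightarrow> scong (Nu a C) (Nu a D)"

inductive cred :: "config \<Rightarrow> config \<Rightarrow> bool" where
  R_Spawn: "b \<notin> fnc (Actor a (plug E (Spawn M)) Ws) \<Longrightarrow>
     cred (Actor a (plug E (Spawn M)) Ws)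
          (Nu b (Par (Actor a (plug E (Return (Nm b))) Ws) (Actor b M [])))"
| R_Send: "cred (Par (Actor a (plug E (Send V' (Nm b))) Vs) (Actor b M Ws))
                (Par (Actor a (plug E (Return Unit)) Vs) (Actor b M (Ws @ [V'])))"
| R_SendSelf: "cred (Actor a (plug E (Send V' (Nm a))) Vs)
                    (Actor a (plug E (Return Unit)) (Vs @ [V']))"
| R_Self: "cred (Actor a (plug E Self) Vs) (Actor a (plug E (Return (Nm a))) Vs)"
| R_Receive: "cred (Actor a (plug E Receive) (W # Vs)) (Actor a (plug E (Return W)) Vs)"
| R_LiftPar: "cred C1 C2 \<Longrightarrow> cred (Par C1 D) (Par C2 D)"
| R_LiftNu: "cred C1 C2 \<Longrightarrow> cred (Nu a C1) (Nu a C2)"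
| R_LiftM: "tred M1 M2 \<Longrightarrow> cred (Actor a M1 Vs) (Actor a M2 Vs)"
| R_Struct: "scong C C' \<Longrightarrow> cred C' D' \<Longrightarrow> scong D' D \<Longrightarrow> cred C D"

end

theory Submission
  imports Defs
begin

text \<open>Term reduction preserves types by the substitution lemma.
  A computation plug E M is typed by typing M and, separately, the context E, so an
  actor step only has to retype its redex. Each axiom of structural congruence
  preserves typing; scope extrusion works because a name outside fnc C is neither
  owned by C nor relevant to its typing. For spawn, the fresh name enters the name
  environment without affecting the typing of the spawning actor, in which it does not
  occur.\<close>

inductive_cases vtyp_NmE: "vtyp G Vs (Nm a) A"
inductive_cases vtyp_LamE: "vtyp G Vs (Lam M) A"
inductive_cases ttyp_AppE: "ttyp G Vs C (App V W) B"
inductive_cases ttyp_LetE: "ttyp G Vs C (Let M N) B"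
inductive_cases ttyp_ReturnE: "ttyp G Vs C (Return V) B"
inductive_cases ttyp_SendE: "ttyp G Vs C (Send V W) B"
inductive_cases ttyp_ReceiveE: "ttyp G Vs C Receive B"
inductive_cases ttyp_SpawnE: "ttyp G Vs C (Spawn M) B"
inductive_cases ttyp_SelfE: "ttyp G Vs C Self B"

inductive_cases ctyp_ParE: "ctyp G Vs D (Par C1 C2)"
inductive_cases ctyp_NuE: "ctyp G Vs D (Nu a C)"
inductive_cases ctyp_ActorE: "ctyp G Vs D (Actor a M Ws)"

lemma vtyp_ttyp_name_cong:
  "vtyp G Vs V A \<Longrightarrow> (\<forall>x\<in>fnv V. G' x = G x) \<Longrightarrow> vtyp G' Vs V A"
  "ttyp G Vs C M B \<Longrightarrow> (\<forall>x\<in>fnt M. G' x = G x) \<Longrightarrow> ttyp G' Vs C M B"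
  by (induct rule: vtyp_ttyp.inducts) (auto intro: vtyp_ttyp.intros)

lemma vtyp_ttyp_lift:
  "vtyp G Vs V A \<Longrightarrow> Vs = Us @ Ws \<Longrightarrow> vtyp G (Us @ T # Ws) (liftv (length Us) V) A"
  "ttyp G Vs C M B \<Longrightarrow> Vs = Us @ Ws \<Longrightarrow> ttyp G (Us @ T # Ws) C (liftt (length Us) M) B"
proof (induct arbitrary: Us and Us rule: vtyp_ttyp.inducts)
  case (T_Var i Vs A G)
  then show ?case
    by (auto intro!: vtyp_ttyp.intros simp: nth_append nth_Cons Suc_diff_le split: nat.splits)
next
  case (T_Lam G A Vs C M B)
  then show ?case using T_Lam(2)[of "A # Us"] by (auto intro: vtyp_ttyp.intros)
next
  case (T_Let G Vs C M A N B)
  then show ?case using T_Let(4)[of "A # Us"] by (auto intro: vtyp_ttyp.intros)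
qed (auto intro: vtyp_ttyp.intros)

lemma vtyp_lift0: "vtyp G Vs V A \<Longrightarrow> vtyp G (T # Vs) (liftv 0 V) A"
  using vtyp_ttyp_lift(1)[where Us = "[]"] by simp

lemma vtyp_ttyp_subst:
  "vtyp G Vs V B \<Longrightarrow> Vs = Us @ A # Ws \<Longrightarrow> vtyp G (Us @ Ws) U A
     \<Longrightarrow> vtyp G (Us @ Ws) (substv V (length Us) U) B"
  "ttyp G Vs C M B \<Longrightarrow> Vs = Us @ A # Ws \<Longrightarrow> vtyp G (Us @ Ws) U A
     \<Longrightarrow> ttyp G (Us @ Ws) C (substt M (length Us) U) B"
proof (induct arbitrary: Us U and Us U rule: vtyp_ttyp.inducts)
  case (T_Var i Vs A' G)
  then show ?case
    by (cases "i < length Us") (auto intro!: vtyp_ttyp.intros simp: nth_append)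
next
  case (T_Lam G A' Vs C M B)
  then show ?case
    using T_Lam(2)[of "A' # Us" "liftv 0 U"] vtyp_lift0[OF T_Lam(4)]
    by (auto intro: vtyp_ttyp.intros)
next
  case (T_Let G Vs C M A' N B)
  then show ?case
    using T_Let(2)[of Us U] T_Let(4)[of "A' # Us" "liftv 0 U"] vtyp_lift0[OF T_Let(6)]
    by (auto intro: vtyp_ttyp.intros)
qed (fastforce intro: vtyp_ttyp.intros)+

lemma ttyp_inst: "ttyp G (A # Vs) C M B \<Longrightarrow> vtyp G Vs V A \<Longrightarrow> ttyp G Vs C (inst M V) B"
  using vtyp_ttyp_subst(2)[where Us = "[]"] by simp

text \<open>etyp G Vs C E B T: the context E has a hole of type B and overall type T.\<close>

primrec etyp :: "(name \<rightharpoonup> ty) \<Rightarrow> ty list \<Rightarrow> ty \<Rightarrow> ectx \<Rightarrow> ty \<Rightarrow> ty \<Rightarrow> bool" where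
  "etyp G Vs C Hole B T \<longleftrightarrow> B = T"
| "etyp G Vs C (ELet E N) B T \<longleftrightarrow> (\<exists>A. etyp G Vs C E B A \<and> ttyp G (A # Vs) C N T)"

lemma ttyp_plug_iff:
  "ttyp G Vs C (plug E M) T \<longleftrightarrow> (\<exists>B. ttyp G Vs C M B \<and> etyp G Vs C E B T)"
  by (induct E arbitrary: T) (auto elim!: ttyp_LetE intro: T_Let, blast)

lemma etyp_name_cong:
  "etyp G Vs C E B T \<Longrightarrow> (\<forall>x\<in>fnt (plug E M). G' x = G x) \<Longrightarrow> etyp G' Vs C E B T"
  by (induct E arbitrary: T) (auto intro: vtyp_ttyp_name_cong(2))

lemma fnt_plug_subset: "fnt M \<subseteq> fnt (plug E M)"
  by (induct E) auto

lemma tred_preserves_ttyp: "tred M M' \<Longrightarrow> ttyp G Vs C M B \<Longrightarrow> ttyp G Vs C M' B"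
proof (induct arbitrary: B rule: tred.induct)
  case (R_Beta M V)
  then show ?case by (auto elim!: ttyp_AppE vtyp_LamE intro: ttyp_inst)
next
  case (R_Let V M)
  then show ?case by (auto elim!: ttyp_LetE ttyp_ReturnE intro: ttyp_inst)
next
  case (R_Ctx M M' E)
  then show ?case by (auto simp: ttyp_plug_iff)
qed

lemma ctyp_dom_subset_fnc: "ctyp G Vs D C \<Longrightarrow> dom D \<subseteq> fnc C"
  by (induct rule: ctyp.induct) auto

lemma ctyp_name_cong: "ctyp G Vs D C \<Longrightarrow> (\<forall>x\<in>fnc C. G' x = G x) \<Longrightarrow> ctyp G' Vs D C"
proof (induct arbitrary: G' rule: ctyp.induct)
  case (T_Pid G a A Vs D C)
  have "ctyp (G'(a \<mapsto> TRef A)) Vs (D(a \<mapsto> A)) C"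
    using T_Pid by (intro T_Pid(2)) auto
  then show ?case using T_Pid(3) by (rule ctyp.T_Pid)
next
  case (T_Actor G a A Vs M Ws)
  have "ttyp G' Vs A M TUnit" "\<forall>W\<in>set Ws. vtyp G' Vs W A"
    using T_Actor by (auto intro: vtyp_ttyp_name_cong)
  moreover have "G' a = Some (TRef A)" using T_Actor by simp
  ultimately show ?case by (rule ctyp.T_Actor[rotated])
qed (auto intro!: ctyp.intros)

lemma ctyp_Par_iff:
  "ctyp G Vs D (Par C1 C2) \<longleftrightarrow>
     (\<exists>D1 D2. D = D1 ++ D2 \<and> dom D1 \<inter> dom D2 = {} \<and> ctyp G Vs D1 C1 \<and> ctyp G Vs D2 C2)"
  by (blast elim: ctyp_ParE intro: T_Par)

lemma ctyp_Par_commute: "ctyp G Vs D (Par C1 C2) \<Longrightarrow> ctyp G Vs D (Par C2 C1)"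
  by (auto simp: ctyp_Par_iff) (metis Int_commute map_add_comm)

lemma ctyp_Par_assoc:
  "ctyp G Vs D (Par C1 (Par C2 C3)) \<longleftrightarrow> ctyp G Vs D (Par (Par C1 C2) C3)"
proof
  assume "ctyp G Vs D (Par C1 (Par C2 C3))"
  then obtain D1 D2 D3 where "D = D1 ++ (D2 ++ D3)" "ctyp G Vs D1 C1" "ctyp G Vs D2 C2" "ctyp G Vs D3 C3"
    "dom D1 \<inter> dom D2 = {}" "dom D1 \<inter> dom D3 = {}" "dom D2 \<inter> dom D3 = {}"
    unfolding ctyp_Par_iff by (auto simp: Int_Un_distrib)
  then show "ctyp G Vs D (Par (Par C1 C2) C3)"
    unfolding ctyp_Par_iff by (metis map_add_assoc dom_map_add Int_Un_distrib2 Un_empty)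
next
  assume "ctyp G Vs D (Par (Par C1 C2) C3)"
  then obtain D1 D2 D3 where "D = (D1 ++ D2) ++ D3" "ctyp G Vs D1 C1" "ctyp G Vs D2 C2" "ctyp G Vs D3 C3"
    "dom D1 \<inter> dom D2 = {}" "dom D1 \<inter> dom D3 = {}" "dom D2 \<inter> dom D3 = {}"
    unfolding ctyp_Par_iff by (auto simp: Int_Un_distrib2)
  then show "ctyp G Vs D (Par C1 (Par C2 C3))"
    unfolding ctyp_Par_iff by (metis map_add_assoc dom_map_add Int_Un_distrib Un_empty)
qed

lemma ctyp_scope_extrude:
  assumes "a \<notin> fnc C" and "ctyp G Vs D (Par C (Nu a C'))"
  shows "ctyp G Vs D (Nu a (Par C C'))"
proof -
  from assms(2) obtain D1 D2 A where C: "ctyp G Vs D1 C" and C': "ctyp (G(a \<mapsto> TRef A)) Vs (D2(a \<mapsto> A)) C'"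
    and a_D2: "D2 a = None" and disj: "dom D1 \<inter> dom D2 = {}" and D: "D = D1 ++ D2"
    by (auto simp: ctyp_Par_iff elim!: ctyp_NuE)
  have a_D1: "a \<notin> dom D1" using ctyp_dom_subset_fnc[OF C] assms(1) by auto
  have "ctyp (G(a \<mapsto> TRef A)) Vs D1 C" using ctyp_name_cong[OF C] assms(1) by auto
  then have "ctyp (G(a \<mapsto> TRef A)) Vs (D1 ++ D2(a \<mapsto> A)) (Par C C')"
    using C' disj a_D1 by (intro T_Par) auto
  moreover have "(D1 ++ D2) a = None" using a_D1 a_D2 by (auto simp: map_add_def)
  ultimately show ?thesis unfolding D by (auto intro: T_Pid)
qed

lemma ctyp_scope_intrude:
  assumes "a \<notin> fnc C" and "ctyp G Vs D (Nu a (Par C C'))"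
  shows "ctyp G Vs D (Par C (Nu a C'))"
proof -
  from assms(2) obtain D1 D2 A where C: "ctyp (G(a \<mapsto> TRef A)) Vs D1 C"
    and C': "ctyp (G(a \<mapsto> TRef A)) Vs D2 C'" and a_D: "D a = None"
    and disj: "dom D1 \<inter> dom D2 = {}" and D: "D(a \<mapsto> A) = D1 ++ D2"
    by (auto simp: ctyp_Par_iff elim!: ctyp_NuE)
  have a_D1: "a \<notin> dom D1" using ctyp_dom_subset_fnc[OF C] assms(1) by auto
  have "D2 a = Some A"
    using fun_cong[OF D, of a] a_D1 by (auto simp: map_add_def domIff split: option.splits)
  then have "(D2(a := None))(a \<mapsto> A) = D2" by auto
  then have "ctyp (G(a \<mapsto> TRef A)) Vs ((D2(a := None))(a \<mapsto> A)) C'" using C' by simp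
  then have "ctyp G Vs (D2(a := None)) (Nu a C')" by (rule T_Pid) simp
  moreover have "ctyp G Vs D1 C" using ctyp_name_cong[OF C] assms(1) by auto
  moreover have "dom D1 \<inter> dom (D2(a := None)) = {}" using disj by auto
  ultimately have "ctyp G Vs (D1 ++ D2(a := None)) (Par C (Nu a C'))" by (intro T_Par)
  moreover have "D = (D(a \<mapsto> A))(a := None)" using a_D by auto
  then have "D = D1 ++ D2(a := None)"
    unfolding D using a_D1 by (auto simp: map_add_def fun_eq_iff domIff split: option.splits)
  ultimately show ?thesis by simp
qed

lemma scong_preserves_ctyp: "scong C C' \<Longrightarrow> ctyp G Vs D C \<longleftrightarrow> ctyp G Vs D C'"
proof (induct arbitrary: G D rule: scong.induct)
  case (SC_par C1 C2 C3)
  then show ?case by (simp add: ctyp_Par_iff)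
next
  case (SC_nu C1 C2 a)
  then show ?case by (auto elim!: ctyp_NuE intro: T_Pid)
next
  case (SC_comm C1 C2)
  then show ?case using ctyp_Par_commute by blast
next
  case (SC_assoc C1 C2 C3)
  then show ?case by (rule ctyp_Par_assoc)
next
  case (SC_extr a C C')
  then show ?case using ctyp_scope_extrude ctyp_scope_intrude by blast
qed simp_all

lemma ctyp_Actor_iff:
  "ctyp G Vs D (Actor a M Ws) \<longleftrightarrow>
     (\<exists>A. D = [a \<mapsto> A] \<and> G a = Some (TRef A) \<and> ttyp G Vs A M TUnit \<and> (\<forall>W\<in>set Ws. vtyp G Vs W A))"
  by (blast elim: ctyp_ActorE intro: T_Actor)

lemma ctyp_Actor_spawn:
  assumes "b \<notin> fnc (Actor a (plug E (Spawn M)) Ws)"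
    and "ctyp G Vs D (Actor a (plug E (Spawn M)) Ws)"
  shows "ctyp G Vs D (Nu b (Par (Actor a (plug E (Return (Nm b))) Ws) (Actor b M [])))"
proof -
  from assms(2) obtain A B where D: "D = [a \<mapsto> A]" and a: "G a = Some (TRef A)"
    and E: "etyp G Vs A E (TRef B) TUnit" and M: "ttyp G Vs B M TUnit" and Ws: "\<forall>W\<in>set Ws. vtyp G Vs W A"
    by (auto simp: ctyp_Actor_iff ttyp_plug_iff elim!: ttyp_SpawnE)
  define G' where "G' = G(b \<mapsto> TRef B)"
  have b: "b \<noteq> a" "b \<notin> fnt (plug E (Spawn M))" "\<forall>W\<in>set Ws. b \<notin> fnv W"
    using assms(1) by auto
  then have "b \<notin> fnt M" using fnt_plug_subset[of "Spawn M" E] by auto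
  then have "ttyp G' Vs B M TUnit" using M unfolding G'_def by (auto intro: vtyp_ttyp_name_cong)
  then have actor_b: "ctyp G' Vs [b \<mapsto> B] (Actor b M [])"
    unfolding ctyp_Actor_iff G'_def by simp
  have "etyp G' Vs A E (TRef B) TUnit"
    unfolding G'_def using b(2) by (intro etyp_name_cong[OF E, of "Spawn M"]) auto
  moreover have "ttyp G' Vs A (Return (Nm b)) (TRef B)" unfolding G'_def by (intro T_Return T_Name) simp
  ultimately have "ttyp G' Vs A (plug E (Return (Nm b))) TUnit" by (auto simp: ttyp_plug_iff)
  moreover have "\<forall>W\<in>set Ws. vtyp G' Vs W A"
  proof
    fix W assume "W \<in> set Ws"
    then show "vtyp G' Vs W A"
      using vtyp_ttyp_name_cong(1)[of G Vs W A G'] Ws b(3) unfolding G'_def by auto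
  qed
  ultimately have actor_a: "ctyp G' Vs [a \<mapsto> A] (Actor a (plug E (Return (Nm b))) Ws)"
    using a b(1) unfolding ctyp_Actor_iff G'_def by simp
  have "ctyp G' Vs (D(b \<mapsto> B)) (Par (Actor a (plug E (Return (Nm b))) Ws) (Actor b M []))"
    using T_Par[OF actor_a actor_b] b(1) unfolding D by simp
  then show ?thesis unfolding G'_def by (rule T_Pid) (use D b(1) in simp)
qed

lemma cred_preserves_ctyp: "cred C1 C2 \<Longrightarrow> ctyp G Vs D C1 \<Longrightarrow> ctyp G Vs D C2"
proof (induct arbitrary: G D rule: cred.induct)
  case (R_Spawn b a E M Ws)
  then show ?case by (rule ctyp_Actor_spawn)
next
  case (R_Send a E V' b Vs' M Ws)
  then show ?case
    by (auto simp: ctyp_Par_iff ctyp_Actor_iff ttyp_plug_iff elim!: ttyp_SendE vtyp_NmE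
        intro!: T_Return T_Unit)
next
  case (R_SendSelf a E V' Ws)
  then show ?case
    by (auto simp: ctyp_Actor_iff ttyp_plug_iff elim!: ttyp_SendE vtyp_NmE intro!: T_Return T_Unit)
next
  case (R_Self a E Ws)
  then show ?case
    by (auto simp: ctyp_Actor_iff ttyp_plug_iff elim!: ttyp_SelfE intro!: T_Return T_Name)
next
  case (R_Receive a E W Ws)
  then show ?case
    by (auto simp: ctyp_Actor_iff ttyp_plug_iff elim!: ttyp_ReceiveE intro!: T_Return)
next
  case (R_LiftPar C1 C2 C3)
  then show ?case by (auto simp: ctyp_Par_iff)
next
  case (R_LiftNu C1 C2 a)
  then show ?case by (auto elim!: ctyp_NuE intro: T_Pid)
next
  case (R_LiftM M1 M2 a Ws)
  then show ?case by (auto simp: ctyp_Actor_iff intro: tred_preserves_ttyp)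
next
  case (R_Struct C C' D' C2)
  then show ?case by (simp add: scong_preserves_ctyp)
qed

theorem theorem12:
  assumes "ctyp G Vs D C1"
    and "cred C1 C2"
  shows "ctyp G Vs D C2"
  using cred_preserves_ctyp[OF assms(2,1)] .

end
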